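(* Consider the real-time transmission decision problem described in the context. Suppose that at time slot $i$ the sensor has $N\ge1$ battery units and $n\ge 1$ target measurements remaining, the sensed data has valuation $x_i$, the instantaneous channel gain is $h_i$ (giving success probability $\mathcal{P}_s^i$), and the utility achieved by the base station on successful reception is $U(x_i)$. Then it is optimal for the sensor to transmit the data if and only if $x_i\ge a_N^n$, where \[ a_N^n = U^{-1}\Bigg[\frac{1-\pi}{\mathcal{P}_s^i}\,\mathbb{E}[V(N,n-1)-V(N-1,n-1)] + \frac{\pi}{\mathcal{P}_s^i}\,\mathbb{E}[V(N+1,n-1)-V(N,n-1)]\Bigg]. \]
   Context: An IoT sensor operates in discrete time slots. At the start of each slot $i$ a piece of sensed data with valuation $x_i\in\mathbb{R}^+$ is generated; the valuations are i.i.d. with density $f_X$ and cdf $F_X$. The channel gain $h_i$ in slot $i$ is i.i.d. exponential with mean $\mu^{-1}$ (Rayleigh fading), and is observed by the sensor; the probability that a transmission in slot $i$ is successfully received is $\mathcal{P}_s^i=\alpha_1$ if $h_i\ge\rho_{\text{th}}$ and $\mathcal{P}_s^i=\alpha_0$ if $h_i<\rho_{\text{th}}$, where $\alpha_0,\alpha_1\in(0,1]$. A utility $U(x_i)$ is obtained by the base station when data of valuation $x_i$ is successfully received, where $U:\mathbb{R}\to\mathbb{R}$ is monotonically increasing and invertible. In each slot, after observing $x_i$ and $\mathcal{P}_s^i$, the sensor decides either to transmit (consuming one battery unit, which requires at least one unit available, and earning expected utility $U(x_i)\mathcal{P}_s^i$) or to discard the data (earning zero). After the decision, one unit of energy is harvested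 with probability $\pi\in[0,1]$, independently across slots. Thus from state ($N$ units, $n$ measurements remaining), transmitting leads to ($N$, $n-1$) w.p. $\pi$ and ($N-1$, $n-1$) w.p. $1-\pi$, while discarding leads to ($N+1$, $n-1$) w.p. $\pi$ and ($N$, $n-1$) w.p. $1-\pi$. Once the battery is completely depleted (0 units) the sensor shuts down and earns nothing further. The sensor seeks to maximize the expected total utility $\mathbb{E}[\sum_k U(x_k)\mathcal{P}_s^k y_k]$ where $y_k\in\{0,1\}$ is the transmit decision in slot $k$. $V(N,n)$ denotes the maximum expected total utility obtainable over the remaining $n$ slots starting with $N$ battery units, given the observed current $x_i$ and $\mathcal{P}_s^i$; $\mathbb{E}[V(N,n)]$ denotes its expectation over the current slot's valuation and channel state, with $\mathbb{E}[V(N,0)]=0$ and $\mathbb{E}[V(0,n)]=0$. *)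

theory Defs
  imports "HOL-Probability.Distributions"
begin

definition Ps :: "real \<Rightarrow> real \<Rightarrow> real \<Rightarrow> real \<Rightarrow> real" where
  "Ps \<alpha>0 \<alpha>1 \<rho> h = (if h \<ge> \<rho> then \<alpha>1 else \<alpha>0)"

text \<open>Value of transmitting / discarding in the current slot, given the current
  battery level N, observed valuation x, observed success probability p, and the
  continuation function W (W M = expected optimal value from battery M with one
  slot fewer).  Transmitting: battery stays N w.p. pi, drops to N-1 w.p. 1-pi.
  Discarding: battery rises to N+1 w.p. pi, stays N w.p. 1-pi.\<close>
definition tx_value :: "(real \<Rightarrow> real) \<Rightarrow> real \<Rightarrow> (nat \<Rightarrow> real) \<Rightarrow> nat \<Rightarrow> real \<Rightarrow> real \<Rightarrow> real" where
  "tx_value U \<pi> W N x p = U x * p + (1 - \<pi>) * W (N - 1) + \<pi> * W N"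

definition discard_value :: "real \<Rightarrow> (nat \<Rightarrow> real) \<Rightarrow> nat \<Rightarrow> real" where
  "discard_value \<pi> W N = \<pi> * W (N + 1) + (1 - \<pi>) * W N"

text \<open>EV U f mu rho alpha0 alpha1 pi n N = E[V(N,n)]: expectation over the current
  slot's valuation x (density f) and channel gain h (exponential with mean 1/mu)
  of the optimal value V(N,n).\<close>
primrec EV :: "(real \<Rightarrow> real) \<Rightarrow> (real \<Rightarrow> real) \<Rightarrow> real \<Rightarrow> real \<Rightarrow> real \<Rightarrow> real \<Rightarrow> real
    \<Rightarrow> nat \<Rightarrow> nat \<Rightarrow> real" where
  "EV U f \<mu> \<rho> \<alpha>0 \<alpha>1 \<pi> 0 = (\<lambda>N. 0)"
| "EV U f \<mu> \<rho> \<alpha>0 \<alpha>1 \<pi> (Suc n) = (\<lambda>N. if N = 0 then 0 else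
     (LINT x|lborel. LINT h|lborel. f x * exponential_density \<mu> h *
        max (tx_value U \<pi> (EV U f \<mu> \<rho> \<alpha>0 \<alpha>1 \<pi> n) N x (Ps \<alpha>0 \<alpha>1 \<rho> h))
            (discard_value \<pi> (EV U f \<mu> \<rho> \<alpha>0 \<alpha>1 \<pi> n) N)))"

text \<open>With N >= 1 units and n >= 1 slots remaining (current one included), having
  observed x and p, transmitting is optimal iff its value attains the maximum in the
  Bellman equation V(N,n) = max(transmit value, discard value).\<close>
definition transmit_optimal :: "(real \<Rightarrow> real) \<Rightarrow> (real \<Rightarrow> real) \<Rightarrow> real \<Rightarrow> real \<Rightarrow> real \<Rightarrow> real
    \<Rightarrow> real \<Rightarrow> nat \<Rightarrow> nat \<Rightarrow> real \<Rightarrow> real \<Rightarrow> bool" where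
  "transmit_optimal U f \<mu> \<rho> \<alpha>0 \<alpha>1 \<pi> N n x p \<longleftrightarrow>
     tx_value U \<pi> (EV U f \<mu> \<rho> \<alpha>0 \<alpha>1 \<pi> (n - 1)) N x p
       \<ge> discard_value \<pi> (EV U f \<mu> \<rho> \<alpha>0 \<alpha>1 \<pi> (n - 1)) N"

definition threshold :: "(real \<Rightarrow> real) \<Rightarrow> (real \<Rightarrow> real) \<Rightarrow> real \<Rightarrow> real \<Rightarrow> real \<Rightarrow> real
    \<Rightarrow> real \<Rightarrow> nat \<Rightarrow> nat \<Rightarrow> real \<Rightarrow> real" where
  "threshold U f \<mu> \<rho> \<alpha>0 \<alpha>1 \<pi> N n p =
     (let W = EV U f \<mu> \<rho> \<alpha>0 \<alpha>1 \<pi> (n - 1) in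
      inv U ((1 - \<pi>) / p * (W N - W (N - 1)) + \<pi> / p * (W (N + 1) - W N)))"

end

theory Submission
  imports Defs
begin

text \<open>Transmitting beats discarding exactly when the expected immediate reward U(x) p
  outweighs the expected loss of continuation value caused by spending one unit of
  energy, (1 - \<pi>) (W N - W (N - 1)) + \<pi> (W (N + 1) - W N), with W = E[V(-, n - 1)].
  Since p > 0 and U is a strictly increasing bijection, this comparison can be
  divided by p and pulled back through U, giving the threshold on x.\<close>

lemma inv_le_iff_le_of_mono_bij:
  fixes U :: "'a::linorder \<Rightarrow> 'b::linorder"
  assumes "mono U" and "bij U"
  shows "inv U t \<le> x \<longleftrightarrow> t \<le> U x"
proof -
  have "strict_mono U"
    using assms by (simp add: mono_imp_strict_mono bij_is_inj)
  then have "inv U t \<le> x \<longleftrightarrow> U (inv U t) \<le> U x"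
    by (simp add: strict_mono_less_eq)
  also have "U (inv U t) = t"
    using \<open>bij U\<close> by (simp add: bij_is_surj surj_f_inv_f)
  finally show ?thesis .
qed

lemma Ps_pos: "0 < \<alpha>0 \<Longrightarrow> 0 < \<alpha>1 \<Longrightarrow> 0 < Ps \<alpha>0 \<alpha>1 \<rho> h"
  by (simp add: Ps_def)

lemma discard_value_le_tx_value_iff:
  "discard_value \<pi> W N \<le> tx_value U \<pi> W N x p \<longleftrightarrow>
     (1 - \<pi>) * (W N - W (N - 1)) + \<pi> * (W (N + 1) - W N) \<le> U x * p"
  by (simp add: tx_value_def discard_value_def algebra_simps)

lemma transmit_optimal_iff_threshold_le:
  assumes "mono U" and "bij U" and "0 < p"
  shows "transmit_optimal U f \<mu> \<rho> \<alpha>0 \<alpha>1 \<pi> N n x p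
     \<longleftrightarrow> threshold U f \<mu> \<rho> \<alpha>0 \<alpha>1 \<pi> N n p \<le> x"
proof -
  define W where "W = EV U f \<mu> \<rho> \<alpha>0 \<alpha>1 \<pi> (n - 1)"
  have "transmit_optimal U f \<mu> \<rho> \<alpha>0 \<alpha>1 \<pi> N n x p \<longleftrightarrow>
      (1 - \<pi>) * (W N - W (N - 1)) + \<pi> * (W (N + 1) - W N) \<le> U x * p"
    unfolding transmit_optimal_def W_def[symmetric] by (rule discard_value_le_tx_value_iff)
  also have "\<dots> \<longleftrightarrow> (1 - \<pi>) / p * (W N - W (N - 1)) + \<pi> / p * (W (N + 1) - W N) \<le> U x"
    using \<open>0 < p\<close> by (simp add: pos_divide_le_eq flip: add_divide_distrib)
  also have "\<dots> \<longleftrightarrow> threshold U f \<mu> \<rho> \<alpha>0 \<alpha>1 \<pi> N n p \<le> x"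
    unfolding threshold_def W_def[symmetric] Let_def
    using assms by (simp add: inv_le_iff_le_of_mono_bij)
  finally show ?thesis .
qed

theorem theorem1:
  fixes U f :: "real \<Rightarrow> real" and \<mu> \<rho> \<alpha>0 \<alpha>1 \<pi> x h :: real and N n :: nat
  assumes U_mono: "mono U" and U_inv: "bij U"
    and f_meas: "f \<in> borel_measurable lborel"
    and f_nonneg: "\<And>y. 0 \<le> f y" and f_supp: "\<And>y. y < 0 \<Longrightarrow> f y = 0"
    and f_prob: "(LINT y|lborel. f y) = 1" and f_int: "integrable lborel f"
    and mu_pos: "0 < \<mu>"
    and alpha0: "0 < \<alpha>0" "\<alpha>0 \<le> 1" and alpha1: "0 < \<alpha>1" "\<alpha>1 \<le> 1"
    and pi: "0 \<le> \<pi>" "\<pi> \<le> 1"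
    and N: "N \<ge> 1" and n: "n \<ge> 1"
    and x: "0 \<le> x" and h: "0 \<le> h"
  shows "transmit_optimal U f \<mu> \<rho> \<alpha>0 \<alpha>1 \<pi> N n x (Ps \<alpha>0 \<alpha>1 \<rho> h)
     \<longleftrightarrow> x \<ge> threshold U f \<mu> \<rho> \<alpha>0 \<alpha>1 \<pi> N n (Ps \<alpha>0 \<alpha>1 \<rho> h)"
  using U_mono U_inv Ps_pos[OF alpha0(1) alpha1(1)]
  by (rule transmit_optimal_iff_threshold_le)

end
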